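(* Let $m\ge3$, $n=2^m-1$, and let $\mathcal{C}$ be the $[2^m-1,2^m-1-m]$ binary Hamming code whose parity-check matrix has, as its $i$-th column, the binary representation of $i$ (as an $m$-bit vector), for $1\le i\le 2^m-1$. Then \[ N(\mathcal{C};S_2)=2^{\lfloor (2^m-1)/2\rfloor-1}. \]
   Context: $S_2\subseteq\{0,1\}^n$ (the 2-charge constraint) is the set of $\mathbf{x}\in\{0,1\}^n$ such that, with $y_i=(-1)^{x_i}$, $0\le\sum_{i=1}^r y_i\le 2$ for all $1\le r\le n$. $N(\mathcal{C};S_2)=|\mathcal{C}\cap S_2|$ is the number of codewords of $\mathcal{C}$ in $S_2$. *)

theory Defs
  imports Main
begin

(* Binary words of length n are lists over {0,1}; position i (1-based) is x ! (i-1). *)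
definition binary_words :: "nat \<Rightarrow> nat list set" where
  "binary_words n = {x. length x = n \<and> set x \<subseteq> {0,1}}"

definition bit_of :: "nat \<Rightarrow> nat \<Rightarrow> nat" where
  "bit_of i j = i div 2 ^ j mod 2"

(* Binary Hamming code of length 2^m - 1 with parity-check matrix H whose i-th
   column is the m-bit binary representation of i (1 <= i <= 2^m - 1):
   x is a codeword iff H x^T = 0 over GF(2), i.e. every row sum is even. *)
definition hamming_code :: "nat \<Rightarrow> nat list set" where
  "hamming_code m = {x \<in> binary_words (2 ^ m - 1).
      \<forall>j<m. even (\<Sum>i=1..2 ^ m - 1. bit_of i j * x ! (i - 1))}"

definition S2 :: "nat \<Rightarrow> nat list set" where
  "S2 n = {x \<in> binary_words n.
      \<forall>r\<in>{1..n}. 0 \<le> (\<Sum>i=1..r. (-1::int) ^ (x ! (i - 1))) \<and>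
                   (\<Sum>i=1..r. (-1::int) ^ (x ! (i - 1))) \<le> 2}"

definition N_count :: "nat list set \<Rightarrow> nat list set \<Rightarrow> nat" where
  "N_count C S = card (C \<inter> S)"

end

theory Submission
  imports Defs
begin

text \<open>
  Since every step y_i is \<open>\<plusminus>1\<close>, the prefix charge has the parity of r, so the constraint
  \<open>0 \<le> charge \<le> 2\<close> forces charge 1 after every odd prefix: x_1 = 0 and the following
  positions come in complementary pairs. Hence the words of S_2 of length 2K + 1 correspond to
  arbitrary binary words b of length K. For n = 2^m - 1 the two columns of the parity-check
  matrix at a complementary pair are 2k and 2k + 1, which differ only in bit 0. Therefore every
  parity check except the one for bit 0 sums to the number of k < 2^{m-1} with a given bit set,
  namely 2^{m-2}, which is even; the check for bit 0 is the parity of b. So exactly half of the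
  2^K words b give codewords.
\<close>

lemma binary_words_iff_nth:
  "x \<in> binary_words n \<longleftrightarrow> length x = n \<and> (\<forall>i<n. x ! i \<le> 1)"
  unfolding binary_words_def by (force simp: set_conv_nth)

lemma binary_words_Suc:
  "binary_words (Suc n) = Cons 0 ` binary_words n \<union> Cons 1 ` binary_words n"
  unfolding binary_words_def by (auto simp: length_Suc_conv)

lemma binary_words_eq_lists: "binary_words n = {xs. set xs \<subseteq> {0, 1} \<and> length xs = n}"
  unfolding binary_words_def by auto

lemma finite_binary_words: "finite (binary_words n)"
  unfolding binary_words_eq_lists by (rule finite_lists_length_eq) simp

lemma card_binary_words: "card (binary_words n) = 2 ^ n"
  unfolding binary_words_eq_lists by (simp add: card_lists_length_eq numeral_2_eq_2)

lemma card_even_sum_list_binary_words: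
  "card {b \<in> binary_words (Suc n). even (sum_list b)} = 2 ^ n"
proof -
  let ?E = "{b \<in> binary_words n. even (sum_list b)}" and ?O = "{b \<in> binary_words n. odd (sum_list b)}"
  have split: "{b \<in> binary_words (Suc n). even (sum_list b)} = Cons 0 ` ?E \<union> Cons 1 ` ?O"
    unfolding binary_words_Suc by auto
  have "card {b \<in> binary_words (Suc n). even (sum_list b)} = card ?E + card ?O"
    unfolding split by (subst card_Un_disjoint) (auto simp: card_image finite_binary_words)
  also have "\<dots> = card (?E \<union> ?O)"
    by (simp add: card_Un_disjoint finite_binary_words disjoint_iff)
  also have "?E \<union> ?O = binary_words n" by blast
  finally show ?thesis by (simp add: card_binary_words)
qed

definition charge :: "nat list \<Rightarrow> nat \<Rightarrow> int" where
  "charge x r = (\<Sum>i=1..r. (-1) ^ (x ! (i - 1)))"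

lemma charge_Suc: "charge x (Suc r) = charge x r + (-1) ^ (x ! r)"
  by (simp add: charge_def)

lemma charge_of_alternating:
  assumes "\<forall>i<r. x ! i \<le> 1"
    and "\<forall>i<r. even i \<longrightarrow> x ! i = (if i = 0 then 0 else 1 - x ! (i - 1))"
  shows "charge x r = (if odd r then 1 else if r = 0 then 0 else 2 - 2 * int (x ! (r - 1)))"
  using assms
proof (induction r)
  case 0
  then show ?case by (simp add: charge_def)
next
  case (Suc r)
  have "x ! r \<le> 1" "r > 0 \<Longrightarrow> x ! (r - 1) \<le> 1" using Suc.prems(1) by auto
  moreover have "charge x r = (if odd r then 1 else if r = 0 then 0 else 2 - 2 * int (x ! (r - 1)))"
    using Suc by simp
  ultimately show ?case using Suc.prems(2)
    by (cases "odd r"; cases "r = 0") (auto simp: charge_Suc le_Suc_eq)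
qed

lemma charge_bounded_iff_alternating:
  assumes "\<forall>i<r. x ! i \<le> 1"
  shows "(\<forall>s\<in>{1..r}. 0 \<le> charge x s \<and> charge x s \<le> 2) \<longleftrightarrow>
         (\<forall>i<r. even i \<longrightarrow> x ! i = (if i = 0 then 0 else 1 - x ! (i - 1)))"
  using assms
proof (induction r)
  case 0
  then show ?case by simp
next
  case (Suc r)
  let ?bounded = "\<lambda>r. \<forall>s\<in>{1..r}. 0 \<le> charge x s \<and> charge x s \<le> 2"
  let ?alt = "\<lambda>r. \<forall>i<r. even i \<longrightarrow> x ! i = (if i = 0 then 0 else 1 - x ! (i - 1))"
  have bounded_Suc: "?bounded (Suc r) \<longleftrightarrow> ?bounded r \<and> 0 \<le> charge x (Suc r) \<and> charge x (Suc r) \<le> 2"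
    by (auto simp: le_Suc_eq)
  have alt_Suc: "?alt (Suc r) \<longleftrightarrow> ?alt r \<and> (even r \<longrightarrow> x ! r = (if r = 0 then 0 else 1 - x ! (r - 1)))"
    by (auto simp: less_Suc_eq)
  have IH: "?bounded r \<longleftrightarrow> ?alt r" using Suc by simp
  show ?case
  proof (cases "?alt r")
    case True
    have "x ! r \<le> 1" "r > 0 \<Longrightarrow> x ! (r - 1) \<le> 1" using Suc.prems by auto
    moreover have "charge x r = (if odd r then 1 else if r = 0 then 0 else 2 - 2 * int (x ! (r - 1)))"
      using Suc.prems True by (intro charge_of_alternating) auto
    ultimately show ?thesis using True IH unfolding bounded_Suc alt_Suc charge_Suc
      by (cases "odd r"; cases "r = 0") (auto simp: le_Suc_eq)
  next
    case False
    then show ?thesis using IH bounded_Suc alt_Suc by blast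
  qed
qed

lemma S2_iff_alternating:
  "x \<in> S2 n \<longleftrightarrow> x \<in> binary_words n \<and>
     (\<forall>i<n. even i \<longrightarrow> x ! i = (if i = 0 then 0 else 1 - x ! (i - 1)))"
  using charge_bounded_iff_alternating[of n x] binary_words_iff_nth[of x n]
  unfolding S2_def charge_def[symmetric] by blast

definition charge2_word :: "nat list \<Rightarrow> nat list" where
  "charge2_word b = 0 # concat (map (\<lambda>c. [1 - c, c]) b)"

lemma length_charge2_word [simp]: "length (charge2_word b) = 2 * length b + 1"
  unfolding charge2_word_def by (induction b) auto

lemma nth_concat_pairs:
  assumes "k < length b"
  shows "concat (map (\<lambda>c. [f c, g c]) b) ! (2 * k) = f (b ! k)"
    and "concat (map (\<lambda>c. [f c, g c]) b) ! (2 * k + 1) = g (b ! k)"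
  using assms by (induction b arbitrary: k) (auto simp: less_Suc_eq_0_disj)

lemma charge2_word_nth [simp]:
  "charge2_word b ! 0 = 0"
  "k < length b \<Longrightarrow> charge2_word b ! Suc (2 * k) = 1 - b ! k"
  "k < length b \<Longrightarrow> charge2_word b ! Suc (Suc (2 * k)) = b ! k"
  using nth_concat_pairs[of k b "\<lambda>c. 1 - c" "\<lambda>c. c"] by (simp_all add: charge2_word_def)

lemma inj_charge2_word: "inj charge2_word"
proof (rule injI)
  fix a b assume eq: "charge2_word a = charge2_word b"
  then have len: "length a = length b" using length_charge2_word[of a] length_charge2_word[of b] by simp
  show "a = b"
  proof (rule nth_equalityI)
    fix k assume "k < length a"
    then show "a ! k = b ! k" using eq len by (metis charge2_word_nth(3))
  qed (rule len)
qed

lemma odd_length_index_cases: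
  fixes i :: nat
  assumes "i < 2 * K + 1"
  obtains "i = 0" | k where "k < K" "i = 2 * k + 1" | k where "k < K" "i = 2 * k + 2"
proof -
  consider "i = 0" | "odd i" | "even i" "i > 0" by blast
  then show thesis
  proof cases
    case 2
    then have "i div 2 < K" "i = 2 * (i div 2) + 1" using assms by presburger+
    then show thesis by (rule that(2))
  next
    case 3
    then have "i div 2 - 1 < K" "i = 2 * (i div 2 - 1) + 2" using assms by presburger+
    then show thesis by (rule that(3))
  qed (use that in blast)
qed

lemma S2_odd_length_eq_image:
  "S2 (2 * K + 1) = charge2_word ` binary_words K"
proof safe
  fix x assume "x \<in> S2 (2 * K + 1)"
  then have x: "x \<in> binary_words (2 * K + 1)"
    and alt: "\<And>i. i < 2 * K + 1 \<Longrightarrow> even i \<Longrightarrow> x ! i = (if i = 0 then 0 else 1 - x ! (i - 1))"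
    by (auto simp: S2_iff_alternating)
  define b where "b = map (\<lambda>k. x ! (2 * k + 2)) [0..<K]"
  have "b \<in> binary_words K"
    using x unfolding b_def binary_words_iff_nth by auto
  moreover have "x = charge2_word b"
  proof (rule nth_equalityI)
    show "length x = length (charge2_word b)" using x by (simp add: b_def binary_words_def)
    fix i assume "i < length x"
    then have i: "i < 2 * K + 1" using x by (simp add: binary_words_def)
    then show "x ! i = charge2_word b ! i"
    proof (cases rule: odd_length_index_cases)
      case 1
      then show ?thesis using alt[of 0] by simp
    next
      case (2 k)
      have "x ! (2 * k + 1) \<le> 1" using x i 2 by (auto simp: binary_words_iff_nth)
      then show ?thesis using alt[of "2 * k + 2"] 2 by (simp add: b_def)
    next
      case (3 k)
      then show ?thesis by (simp add: b_def)
    qed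
  qed
  ultimately show "x \<in> charge2_word ` binary_words K" by blast
next
  fix b assume b: "b \<in> binary_words K"
  then have len: "length b = K" and bin: "\<And>k. k < K \<Longrightarrow> b ! k \<le> 1"
    by (auto simp: binary_words_iff_nth)
  have "charge2_word b ! i \<le> 1 \<and>
        (even i \<longrightarrow> charge2_word b ! i = (if i = 0 then 0 else 1 - charge2_word b ! (i - 1)))"
    if "i < 2 * K + 1" for i
    using that
  proof (cases rule: odd_length_index_cases)
    case (3 k)
    then show ?thesis using bin[of k] len by simp
  qed (use len in auto)
  then show "charge2_word b \<in> S2 (2 * K + 1)"
    unfolding S2_iff_alternating binary_words_iff_nth using len by auto
qed

lemma bit_of_double [simp]:
  "bit_of (2 * a) 0 = 0" "bit_of (Suc (2 * a)) 0 = 1"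
  "bit_of (2 * a) (Suc q) = bit_of a q" "bit_of (Suc (2 * a)) (Suc q) = bit_of a q"
  by (simp_all add: bit_of_def div_mult2_eq)

lemma sum_lessThan_double:
  fixes N :: nat
  shows "(\<Sum>k<2 * N. g k) = (\<Sum>k<N. g (2 * k) + g (2 * k + 1) :: 'a :: comm_monoid_add)"
  by (induction N) (simp_all add: add.assoc)

lemma sum_bit_of_lessThan_power:
  "q < p \<Longrightarrow> (\<Sum>k<2 ^ p. bit_of k q) = 2 ^ (p - 1)"
proof (induction q arbitrary: p)
  case 0
  then obtain p' where "p = Suc p'" by (cases p) auto
  then show ?case by (simp add: sum_lessThan_double)
next
  case (Suc q)
  then obtain p' where p: "p = Suc p'" "q < p'" by (cases p) auto
  have "(\<Sum>k<2 ^ p. bit_of k (Suc q)) = 2 * (\<Sum>k<2 ^ p'. bit_of k q)"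
    unfolding p by (simp add: sum_lessThan_double sum.distrib)
  also have "\<dots> = 2 * 2 ^ (p' - 1)" using Suc.IH[OF p(2)] by simp
  also have "\<dots> = 2 ^ (p - 1)" using p by (cases p') auto
  finally show ?case .
qed

lemma two_power_minus_one_eq:
  assumes "m > 0"
  shows "(2::nat) ^ m - 1 = 2 * (2 ^ (m - 1) - 1) + 1"
proof -
  have "(2::nat) ^ m = 2 * 2 ^ (m - 1)"
    using assms by (simp flip: power_Suc)
  then show ?thesis using one_le_power[of "2::nat" "m - 1"] by linarith
qed

lemma hamming_row_charge2_word:
  assumes "length b = K"
  shows "(\<Sum>i=1..2 * K + 1. bit_of i j * charge2_word b ! (i - 1)) =
         (\<Sum>k=1..K. bit_of (2 * k) j * (1 - b ! (k - 1)) + bit_of (Suc (2 * k)) j * b ! (k - 1))"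
proof -
  let ?f = "\<lambda>i. bit_of i j * charge2_word b ! (i - 1)"
  have "(\<Sum>i=1..2 * K + 1. ?f i) = (\<Sum>i=2 * 1..Suc (2 * K). ?f i)"
    by (simp add: sum.atLeast_Suc_atMost numeral_2_eq_2)
  also have "\<dots> = (\<Sum>k=1..K. ?f (2 * k) + ?f (Suc (2 * k)))"
    by (rule sum.in_pairs)
  also have "\<dots> = (\<Sum>k=1..K. bit_of (2 * k) j * (1 - b ! (k - 1)) + bit_of (Suc (2 * k)) j * b ! (k - 1))"
  proof (rule sum.cong)
    fix k assume k: "k \<in> {1..K}"
    then have "2 * k - 1 = Suc (2 * (k - 1))" "2 * k = Suc (Suc (2 * (k - 1)))" by auto
    moreover have "k - 1 < length b" using k assms by auto
    ultimately show "?f (2 * k) + ?f (Suc (2 * k)) =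
        bit_of (2 * k) j * (1 - b ! (k - 1)) + bit_of (Suc (2 * k)) j * b ! (k - 1)"
      by (metis diff_Suc_1 charge2_word_nth(2,3))
  qed simp
  finally show ?thesis .
qed

lemma hamming_row_0_charge2_word:
  assumes "length b = K"
  shows "(\<Sum>i=1..2 * K + 1. bit_of i 0 * charge2_word b ! (i - 1)) = sum_list b"
proof -
  have "sum_list b = (\<Sum>k=1..K. b ! (k - 1))"
    using assms by (simp add: sum_list_sum_nth sum.atLeast1_atMost_eq atLeast0LessThan)
  then show ?thesis by (simp only: hamming_row_charge2_word[OF assms]) simp
qed

lemma hamming_row_Suc_charge2_word:
  assumes "b \<in> binary_words K"
  shows "(\<Sum>i=1..2 * K + 1. bit_of i (Suc q) * charge2_word b ! (i - 1)) = (\<Sum>k<Suc K. bit_of k q)"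
proof -
  have len: "length b = K" and bin: "\<And>k. k < K \<Longrightarrow> b ! k \<le> 1"
    using assms by (auto simp: binary_words_iff_nth)
  have "(\<Sum>i=1..2 * K + 1. bit_of i (Suc q) * charge2_word b ! (i - 1)) =
      (\<Sum>k=1..K. bit_of k q * (1 - b ! (k - 1)) + bit_of k q * b ! (k - 1))"
    by (simp only: hamming_row_charge2_word[OF len] bit_of_double)
  also have "\<dots> = (\<Sum>k=1..K. bit_of k q)"
  proof (rule sum.cong)
    fix k assume "k \<in> {1..K}"
    then have "b ! (k - 1) \<le> 1" using bin by auto
    then show "bit_of k q * (1 - b ! (k - 1)) + bit_of k q * b ! (k - 1) = bit_of k q"
      by (simp add: diff_mult_distrib2)
  qed simp
  also have "\<dots> = (\<Sum>k<Suc K. bit_of k q)"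
    by (subst sum.lessThan_Suc_shift) (simp add: bit_of_def sum.atLeast1_atMost_eq)
  finally show ?thesis .
qed

lemma charge2_word_in_hamming_code_iff:
  assumes "m \<ge> 3" and b: "b \<in> binary_words (2 ^ (m - 1) - 1)"
  shows "charge2_word b \<in> hamming_code m \<longleftrightarrow> even (sum_list b)"
proof -
  define K where "K = 2 ^ (m - 1) - (1::nat)"
  have SucK: "Suc K = 2 ^ (m - 1)" unfolding K_def by simp
  have n: "2 ^ m - 1 = 2 * K + 1"
    unfolding K_def by (rule two_power_minus_one_eq) (use \<open>m \<ge> 3\<close> in simp)
  have bK: "b \<in> binary_words K" using b by (simp add: K_def)
  then have len: "length b = K" by (simp add: binary_words_iff_nth)
  have "charge2_word b \<in> S2 (2 * K + 1)"
    using b unfolding S2_odd_length_eq_image K_def by blast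
  then have word: "charge2_word b \<in> binary_words (2 ^ m - 1)"
    unfolding n S2_iff_alternating by blast
  let ?row = "\<lambda>j. \<Sum>i=1..2 ^ m - 1. bit_of i j * charge2_word b ! (i - 1)"
  have row_0: "?row 0 = sum_list b"
    unfolding n by (rule hamming_row_0_charge2_word[OF len])
  have row_Suc: "even (?row (Suc q))" if "Suc q < m" for q
  proof -
    have "?row (Suc q) = (\<Sum>k<2 ^ (m - 1). bit_of k q)"
      unfolding n SucK[symmetric] by (rule hamming_row_Suc_charge2_word[OF bK])
    also have "\<dots> = 2 ^ (m - 2)"
      using sum_bit_of_lessThan_power[of q "m - 1"] that by simp
    finally show ?thesis using \<open>m \<ge> 3\<close> by simp
  qed
  have "(\<forall>j<m. even (?row j)) \<longleftrightarrow> even (?row 0)"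
  proof
    assume "even (?row 0)"
    then show "\<forall>j<m. even (?row j)"
      using row_Suc by (metis not0_implies_Suc)
  qed (use \<open>m \<ge> 3\<close> in simp)
  then show ?thesis
    using word unfolding hamming_code_def row_0 mem_Collect_eq by blast
qed

theorem mainTheorem12:
  fixes m :: nat
  assumes "m \<ge> 3"
  shows "N_count (hamming_code m) (S2 (2 ^ m - 1)) = 2 ^ ((2 ^ m - 1) div 2 - 1)"
proof -
  define K where "K = 2 ^ (m - 1) - (1::nat)"
  have n: "2 ^ m - 1 = 2 * K + 1"
    unfolding K_def by (rule two_power_minus_one_eq) (use assms in simp)
  have "(2::nat) ^ 2 \<le> 2 ^ (m - 1)"
    using assms by (intro power_increasing) auto
  then have K: "K = Suc (K - 1)"
    unfolding K_def by simp
  have "hamming_code m \<inter> S2 (2 * K + 1) = charge2_word ` {b \<in> binary_words K. even (sum_list b)}"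
    using charge2_word_in_hamming_code_iff[OF assms] unfolding S2_odd_length_eq_image K_def by auto
  then have "N_count (hamming_code m) (S2 (2 ^ m - 1)) = card {b \<in> binary_words K. even (sum_list b)}"
    unfolding N_count_def n by (simp add: card_image inj_on_subset[OF inj_charge2_word])
  also have "\<dots> = 2 ^ (K - 1)"
    by (subst K) (rule card_even_sum_list_binary_words)
  finally show ?thesis unfolding n by simp
qed

end
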